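(* There is an absolute constant $c>0$ such that for all integers $N,M$ for which $C_{N,M}$ is defined, there is a 2D SLP of size at most $c\cdot(\log N+\log M)$ deriving $C_{N,M}$.
   Context: Alphabet $\Sigma\supseteq\{0,1,\$\}$; logarithms are base 2. For $N=2^n$, $\mathsf{Bin}_N$ is the $N\times(n+2)$ array whose $i$-th row is $\$\,b_{i-1}\,\$$ with $b_{i-1}$ the $n$-bit binary representation of $i-1$; $\mathsf{ShiftBin}_N$ is the $2N\times N(n+2)$ array in which, for each $j\in[1..N]$, rows $j..j+N-1$ and columns $(j-1)(n+2)+1..j(n+2)$ form a copy of $\mathsf{Bin}_N$, all other entries being $0$. For integers $N\ge1$, $M\ge4$, let $M'=2^{n}$ be the largest power of two with $M'(\log M'+2)\le M/2$, assume $N\ge M'$, and let $B=\mathsf{ShiftBin}_{M'}$ (of size $2M'\times M'(\log M'+2)$). The 2D string $C_{N,M}$ of size $N\times M$ is the horizontal concatenation of three parts: (1) the left block, of width $M'(\log M'+2)$: $\lfloor N/(2M')\rfloor$ copies of $B$ stacked vertically, followed below by rows of $0$'s to reach height $N$; (2) the right block, of the same width: $M'$ rows of $0$'s, then $\lfloor (N-M')/(2M')\rfloor$ copies of $B$ stacked vertically, then rows of $0$'s to reach height $N$; (3) an all-$0$ block completing the width to $M$. A 2D SLP is a triple $(\mathcal V,\mathcal S,\rho)$ of nonterminals with dimensions, a start, and productions each being a character, a horizontal concatenation of two nonterminals of equal height, or a vertical concatenation of two nonterminals of equal width, with acyclic occurrence relation; it derives the recursive expansion of $\mathcal S$. Its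 size is the total number of symbols on all right-hand sides. *)

theory Defs
  imports Complex_Main
begin

text \<open>Symbols used by C_{N,M}: 0, 1 and the separator dollar.  A 2D string is a
  rectangular list of rows (row-major); all 2D strings produced below are rectangular.\<close>

datatype sym = Zero | One | Dollar

type_synonym str2d = "sym list list"

text \<open>Nonterminals are the indices 0..length G - 1 of the production list G.  Acyclicity of the occurrence
  relation is enforced by requiring that production i only refers to nonterminals j < i
  (any acyclic grammar can be topologically ordered this way).\<close>

datatype prod = Term sym | HCat nat nat | VCat nat nat

definition hcat :: "str2d \<Rightarrow> str2d \<Rightarrow> str2d option" where
  "hcat A B = (if length A = length B then Some (map2 (@) A B) else None)"

definition vcat :: "str2d \<Rightarrow> str2d \<Rightarrow> str2d option" where
  "vcat A B = (if length (hd A) = length (hd B) then Some (A @ B) else None)"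

function slp_eval :: "prod list \<Rightarrow> nat \<Rightarrow> str2d option" where
  "slp_eval G i =
     (if i < length G then
        (case G ! i of
           Term a \<Rightarrow> Some [[a]]
         | HCat j k \<Rightarrow>
             (if j < i \<and> k < i then
                (case slp_eval G j of None \<Rightarrow> None
                 | Some A \<Rightarrow> (case slp_eval G k of None \<Rightarrow> None | Some B \<Rightarrow> hcat A B))
              else None)
         | VCat j k \<Rightarrow>
             (if j < i \<and> k < i then
                (case slp_eval G j of None \<Rightarrow> None
                 | Some A \<Rightarrow> (case slp_eval G k of None \<Rightarrow> None | Some B \<Rightarrow> vcat A B))
              else None))
      else None)"
  by pat_completeness auto
termination by (relation "measure (\<lambda>(G, i). i)") auto

fun prod_size :: "prod \<Rightarrow> nat" where
  "prod_size (Term _) = 1"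
| "prod_size (HCat _ _) = 2"
| "prod_size (VCat _ _) = 2"

definition slp_size :: "prod list \<Rightarrow> nat" where
  "slp_size G = (\<Sum>p\<leftarrow>G. prod_size p)"

definition slp_derives :: "prod list \<Rightarrow> nat \<Rightarrow> str2d \<Rightarrow> bool" where
  "slp_derives G s S \<longleftrightarrow> s < length G \<and> slp_eval G s = Some S"

text \<open>M' = 2^(Mexp M) is the largest power of two with M'(log M' + 2) \<le> M/2,
  i.e. 2 * 2^n * (n + 2) \<le> M.\<close>
definition Mexp :: "nat \<Rightarrow> nat" where
  "Mexp M = (GREATEST n. 2 * 2 ^ n * (n + 2) \<le> M)"

definition Mpow :: "nat \<Rightarrow> nat" where
  "Mpow M = 2 ^ Mexp M"

text \<open>Entry (i,q) (0-indexed) of Bin_{2^n}: row i is dollar, the n-bit binary representation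
  of i (most significant bit first), dollar.\<close>
definition bin_entry :: "nat \<Rightarrow> nat \<Rightarrow> nat \<Rightarrow> sym" where
  "bin_entry n i q =
     (if q = 0 \<or> q = n + 1 then Dollar
      else if (i div 2 ^ (n - q)) mod 2 = 1 then One else Zero)"

text \<open>Entry (r,c) (0-indexed) of ShiftBin_{2^n} (size 2*2^n x 2^n*(n+2)): block j (0-indexed)
  occupies columns j(n+2)..(j+1)(n+2)-1 and rows j..j+2^n-1.\<close>
definition shiftbin_entry :: "nat \<Rightarrow> nat \<Rightarrow> nat \<Rightarrow> sym" where
  "shiftbin_entry n r c =
     (let w = n + 2; j = c div w; q = c mod w in
      if j \<le> r \<and> r < j + 2 ^ n then bin_entry n (r - j) q else Zero)"

definition C_entry :: "nat \<Rightarrow> nat \<Rightarrow> nat \<Rightarrow> nat \<Rightarrow> sym" where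
  "C_entry N M r c =
     (let n = Mexp M; m = 2 ^ n; W = m * (n + 2) in
      if c < W then
        (if r < (N div (2 * m)) * (2 * m) then shiftbin_entry n (r mod (2 * m)) c else Zero)
      else if c < 2 * W then
        (if m \<le> r \<and> r < m + ((N - m) div (2 * m)) * (2 * m)
         then shiftbin_entry n ((r - m) mod (2 * m)) (c - W) else Zero)
      else Zero)"

definition C_str :: "nat \<Rightarrow> nat \<Rightarrow> str2d" where
  "C_str N M = map (\<lambda>r. map (\<lambda>c. C_entry N M r c) [0..<M]) [0..<N]"

definition C_defined :: "nat \<Rightarrow> nat \<Rightarrow> bool" where
  "C_defined N M \<longleftrightarrow> 1 \<le> N \<and> 4 \<le> M \<and> Mpow M \<le> N"

end

(*
  Every building block is assembled by concatenations, and doubling produces q copies of a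
  block (in particular a constant block of any size below 2^e) with O(log q) productions.
  The binary counter Bin of height m = M' satisfies the recursion
  Bin_{2k} = (0 | Bin_k) over (1 | Bin_k), and the first 2j diagonal blocks of ShiftBin
  arise from the first j ones as (T_j over 0) | (0 over T_j); both recursions have
  log m levels of constant cost. C_{N,M} then consists of two columns of stacked copies of
  ShiftBin padded with zeros, and a zero block, so it has an SLP of size O(log N + log M).
*)

theory Submission
  imports Defs "HOL-Library.Log_Nat"
begin

declare slp_eval.simps[simp del]

definition grid :: "nat \<Rightarrow> nat \<Rightarrow> (nat \<Rightarrow> nat \<Rightarrow> sym) \<Rightarrow> str2d" where
  "grid h w f = map (\<lambda>r. map (f r) [0..<w]) [0..<h]"

definition beside :: "nat \<Rightarrow> (nat \<Rightarrow> nat \<Rightarrow> 'a) \<Rightarrow> (nat \<Rightarrow> nat \<Rightarrow> 'a) \<Rightarrow> nat \<Rightarrow> nat \<Rightarrow> 'a" where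
  "beside w f g = (\<lambda>r c. if c < w then f r c else g r (c - w))"

definition atop :: "nat \<Rightarrow> (nat \<Rightarrow> nat \<Rightarrow> 'a) \<Rightarrow> (nat \<Rightarrow> nat \<Rightarrow> 'a) \<Rightarrow> nat \<Rightarrow> nat \<Rightarrow> 'a" where
  "atop h f g = (\<lambda>r c. if r < h then f r c else g (r - h) c)"

lemma grid_cong:
  "h = h' \<Longrightarrow> w = w' \<Longrightarrow> (\<And>r c. r < h \<Longrightarrow> c < w \<Longrightarrow> f r c = g r c) \<Longrightarrow> grid h w f = grid h' w' g"
  unfolding grid_def by auto

lemma grid_singleton [simp]: "grid (Suc 0) (Suc 0) (\<lambda>_ _. a) = [[a]]"
  by (simp add: grid_def)

lemma length_grid [simp]: "length (grid h w f) = h"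
  by (simp add: grid_def)

lemma beside_const [simp]: "beside w (\<lambda>_ _. a) (\<lambda>_ _. a) = (\<lambda>_ _. a)"
  by (simp add: beside_def)

lemma atop_const [simp]: "atop h (\<lambda>_ _. a) (\<lambda>_ _. a) = (\<lambda>_ _. a)"
  by (simp add: atop_def)

lemma hcat_grid: "hcat (grid h w1 f) (grid h w2 g) = Some (grid h (w1 + w2) (beside w1 f g))"
proof -
  have "map2 (@) (grid h w1 f) (grid h w2 g) = grid h (w1 + w2) (beside w1 f g)"
    by (auto simp: grid_def beside_def map2_map_map intro!: nth_equalityI simp: nth_append)
  then show ?thesis
    by (simp add: hcat_def)
qed

lemma vcat_grid:
  assumes "h1 > 0" "h2 > 0"
  shows "vcat (grid h1 w f) (grid h2 w g) = Some (grid (h1 + h2) w (atop h1 f g))"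
proof -
  have "grid h1 w f @ grid h2 w g = grid (h1 + h2) w (atop h1 f g)"
    by (auto simp: grid_def atop_def intro!: nth_equalityI simp: nth_append)
  moreover have "length (hd (grid h1 w f)) = length (hd (grid h2 w g))"
    using assms by (simp add: grid_def hd_map)
  ultimately show ?thesis
    by (simp add: vcat_def)
qed

lemma slp_eval_append: "i < length G \<Longrightarrow> slp_eval (G @ H) i = slp_eval G i"
proof (induction i rule: less_induct)
  case (less i)
  then show ?case
    by (subst (1 2) slp_eval.simps) (auto simp: nth_append split: prod.split option.split)
qed

lemma slp_eval_snoc:
  "slp_eval (G @ [Term a]) (length G) = Some [[a]]"
  "i < length G \<Longrightarrow> j < length G \<Longrightarrow> slp_eval G i = Some A \<Longrightarrow> slp_eval G j = Some B \<Longrightarrow>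
     slp_eval (G @ [HCat i j]) (length G) = hcat A B"
  "i < length G \<Longrightarrow> j < length G \<Longrightarrow> slp_eval G i = Some A \<Longrightarrow> slp_eval G j = Some B \<Longrightarrow>
     slp_eval (G @ [VCat i j]) (length G) = vcat A B"
  by (subst slp_eval.simps; simp add: slp_eval_append)+

definition slp_pictures :: "prod list \<Rightarrow> str2d set" where
  "slp_pictures G = {A. \<exists>i<length G. slp_eval G i = Some A}"

lemma slp_pictures_append: "slp_pictures G \<subseteq> slp_pictures (G @ H)"
  unfolding slp_pictures_def by (auto simp: slp_eval_append intro: trans_less_add1)

definition degenerate :: "str2d \<Rightarrow> bool" where
  "degenerate A \<longleftrightarrow> (\<forall>row \<in> set A. row = [])"

lemma degenerate_grid_iff: "degenerate (grid h w f) \<longleftrightarrow> h = 0 \<or> w = 0"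
  by (auto simp: degenerate_def grid_def)

text \<open>Pictures without entries cannot be derived by an SLP, but they never need to be:
  they are neutral for concatenation, so only the nondegenerate members of P count.\<close>

definition slp_buildable :: "nat \<Rightarrow> str2d set \<Rightarrow> bool" where
  "slp_buildable k P \<longleftrightarrow>
     (\<exists>G. slp_size G \<le> k \<and> P \<subseteq> slp_pictures G \<union> Collect degenerate)"

lemma slp_buildable_empty: "slp_buildable 0 {}"
  unfolding slp_buildable_def by (auto intro: exI[of _ "[]"] simp: slp_size_def)

lemma slp_buildable_mono: "slp_buildable k P \<Longrightarrow> Q \<subseteq> P \<Longrightarrow> k \<le> l \<Longrightarrow> slp_buildable l Q"
  unfolding slp_buildable_def by (meson order.trans)

lemma slp_buildable_insert_degenerate:
  "slp_buildable k P \<Longrightarrow> degenerate A \<Longrightarrow> slp_buildable k (insert A P)"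
  unfolding slp_buildable_def by blast

lemma slp_buildable_snoc:
  assumes "slp_buildable k P"
    and "\<And>G. P \<subseteq> slp_pictures G \<union> Collect degenerate \<Longrightarrow>
           \<exists>p. prod_size p \<le> c \<and> slp_eval (G @ [p]) (length G) = Some C"
  shows "slp_buildable (k + c) (insert C P)"
proof -
  obtain G where G: "slp_size G \<le> k" "P \<subseteq> slp_pictures G \<union> Collect degenerate"
    using assms(1) unfolding slp_buildable_def by blast
  obtain p where p: "prod_size p \<le> c" "slp_eval (G @ [p]) (length G) = Some C"
    using assms(2)[OF G(2)] by blast
  have "C \<in> slp_pictures (G @ [p])"
    using p(2) by (auto simp: slp_pictures_def)
  moreover have "slp_size (G @ [p]) \<le> k + c"
    using G(1) p(1) by (simp add: slp_size_def)
  ultimately show ?thesis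
    using G(2) slp_pictures_append[of G "[p]"] unfolding slp_buildable_def by blast
qed

lemma slp_buildable_term: "slp_buildable k P \<Longrightarrow> slp_buildable (k + 1) (insert [[a]] P)"
  by (erule slp_buildable_snoc) (auto intro!: exI[of _ "Term a"] simp: slp_eval_snoc)

lemma slp_buildable_cat:
  assumes "slp_buildable k P" "A \<in> P" "B \<in> P" "\<not> degenerate A" "\<not> degenerate B"
    and "hcat A B = Some C \<or> vcat A B = Some C"
  shows "slp_buildable (k + 2) (insert C P)"
proof (rule slp_buildable_snoc[OF assms(1)])
  fix G assume "P \<subseteq> slp_pictures G \<union> Collect degenerate"
  then obtain i j where "i < length G" "slp_eval G i = Some A" "j < length G" "slp_eval G j = Some B"
    using assms(2-5) unfolding slp_pictures_def by blast
  then show "\<exists>p. prod_size p \<le> 2 \<and> slp_eval (G @ [p]) (length G) = Some C"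
    using assms(6) by (auto simp: slp_eval_snoc intro: exI[of _ "HCat i j"] exI[of _ "VCat i j"])
qed

lemma slp_buildable_beside:
  assumes P: "slp_buildable k P" and f: "grid h w1 f \<in> P" and g: "grid h w2 g \<in> P"
  shows "slp_buildable (k + 2) (insert (grid h (w1 + w2) (beside w1 f g)) P)"
proof -
  consider "h = 0 \<or> w1 + w2 = 0" | "h > 0" "w1 = 0" | "h > 0" "w2 = 0" | "h > 0" "w1 > 0" "w2 > 0"
    by linarith
  then show ?thesis
  proof cases
    case 1
    then show ?thesis
      by (intro slp_buildable_insert_degenerate slp_buildable_mono[OF P]) (auto simp: degenerate_grid_iff)
  next
    case 2
    then have "grid h (w1 + w2) (beside w1 f g) = grid h w2 g"
      by (intro grid_cong) (auto simp: beside_def)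
    then show ?thesis
      using g by (auto intro: slp_buildable_mono[OF P] simp: insert_absorb)
  next
    case 3
    then have "grid h (w1 + w2) (beside w1 f g) = grid h w1 f"
      by (intro grid_cong) (auto simp: beside_def)
    then show ?thesis
      using f by (auto intro: slp_buildable_mono[OF P] simp: insert_absorb)
  next
    case 4
    then show ?thesis
      by (intro slp_buildable_cat[OF P f g]) (auto simp: degenerate_grid_iff hcat_grid)
  qed
qed

lemma slp_buildable_atop:
  assumes P: "slp_buildable k P" and f: "grid h1 w f \<in> P" and g: "grid h2 w g \<in> P"
  shows "slp_buildable (k + 2) (insert (grid (h1 + h2) w (atop h1 f g)) P)"
proof -
  consider "w = 0 \<or> h1 + h2 = 0" | "w > 0" "h1 = 0" | "w > 0" "h2 = 0" | "w > 0" "h1 > 0" "h2 > 0"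
    by linarith
  then show ?thesis
  proof cases
    case 1
    then show ?thesis
      by (intro slp_buildable_insert_degenerate slp_buildable_mono[OF P]) (auto simp: degenerate_grid_iff)
  next
    case 2
    then have "grid (h1 + h2) w (atop h1 f g) = grid h2 w g"
      by (intro grid_cong) (auto simp: atop_def)
    then show ?thesis
      using g by (auto intro: slp_buildable_mono[OF P] simp: insert_absorb)
  next
    case 3
    then have "grid (h1 + h2) w (atop h1 f g) = grid h1 w f"
      by (intro grid_cong) (auto simp: atop_def)
    then show ?thesis
      using f by (auto intro: slp_buildable_mono[OF P] simp: insert_absorb)
  next
    case 4
    then show ?thesis
      by (intro slp_buildable_cat[OF P f g]) (auto simp: degenerate_grid_iff vcat_grid)
  qed
qed

lemma mod_diff_mult_self: "a * h \<le> (r::nat) \<Longrightarrow> (r - a * h) mod h = r mod h"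
  by (metis le_add_diff_inverse2 mod_mult_self1)

text \<open>Binary method: q copies cost at most two concatenations per bit of q.\<close>

lemma slp_buildable_multiple:
  fixes X :: "nat \<Rightarrow> str2d"
  assumes join: "\<And>k P a b. slp_buildable k P \<Longrightarrow> X a \<in> P \<Longrightarrow> X b \<in> P \<Longrightarrow>
                   slp_buildable (k + 2) (insert (X (a + b)) P)"
    and zero: "degenerate (X 0)"
    and P: "slp_buildable k P" and one: "X 1 \<in> P" and q: "q < 2 ^ e"
  shows "slp_buildable (k + 4 * e) (insert (X q) P)"
  using q
proof (induction e arbitrary: q)
  case 0
  then show ?case
    using slp_buildable_insert_degenerate[OF P zero] by simp
next
  case (Suc e)
  define p where "p = q div 2"
  have "p < 2 ^ e"
    using Suc.prems by (simp add: p_def)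
  then have "slp_buildable (k + 4 * e) (insert (X p) P)"
    by (rule Suc.IH)
  then have double: "slp_buildable (k + 4 * e + 2) (insert (X (2 * p)) (insert (X p) P))"
    using join[of _ _ p p] by (simp add: mult_2)
  show ?case
  proof (cases "even q")
    case True
    show ?thesis
      using double by (rule slp_buildable_mono) (use True in \<open>auto simp: p_def\<close>)
  next
    case False
    have "slp_buildable (k + 4 * e + 2 + 2) (insert (X (2 * p + 1)) (insert (X (2 * p)) (insert (X p) P)))"
      using join[OF double, of "2 * p" 1] one by simp
    then show ?thesis
      by (rule slp_buildable_mono) (use False in \<open>auto simp: p_def\<close>)
  qed
qed

lemma slp_buildable_repeat_rows:
  assumes P: "slp_buildable k P" and f: "grid h w f \<in> P" and q: "q < 2 ^ e"
  shows "slp_buildable (k + 4 * e) (insert (grid (q * h) w (\<lambda>r c. f (r mod h) c)) P)"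
proof (rule slp_buildable_multiple[where X = "\<lambda>q. grid (q * h) w (\<lambda>r c. f (r mod h) c)", OF _ _ P _ q])
  fix k P a b
  assume "slp_buildable k P" "grid (a * h) w (\<lambda>r c. f (r mod h) c) \<in> P" "grid (b * h) w (\<lambda>r c. f (r mod h) c) \<in> P"
  from slp_buildable_atop[OF this]
  show "slp_buildable (k + 2) (insert (grid ((a + b) * h) w (\<lambda>r c. f (r mod h) c)) P)"
  proof (rule back_subst[of "\<lambda>A. slp_buildable _ (insert A P)"], intro grid_cong)
    fix r c
    show "atop (a * h) (\<lambda>r c. f (r mod h) c) (\<lambda>r c. f (r mod h) c) r c = f (r mod h) c"
      by (simp add: atop_def mod_diff_mult_self)
  qed (simp_all add: distrib_right)
next
  show "grid (1 * h) w (\<lambda>r c. f (r mod h) c) \<in> P"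
    using f by (metis (no_types, lifting) grid_cong mod_less mult_1)
qed (simp add: degenerate_grid_iff)

lemma slp_buildable_repeat_cols:
  assumes P: "slp_buildable k P" and f: "grid h w f \<in> P" and q: "q < 2 ^ e"
  shows "slp_buildable (k + 4 * e) (insert (grid h (q * w) (\<lambda>r c. f r (c mod w))) P)"
proof (rule slp_buildable_multiple[where X = "\<lambda>q. grid h (q * w) (\<lambda>r c. f r (c mod w))", OF _ _ P _ q])
  fix k P a b
  assume "slp_buildable k P" "grid h (a * w) (\<lambda>r c. f r (c mod w)) \<in> P" "grid h (b * w) (\<lambda>r c. f r (c mod w)) \<in> P"
  from slp_buildable_beside[OF this]
  show "slp_buildable (k + 2) (insert (grid h ((a + b) * w) (\<lambda>r c. f r (c mod w))) P)"
  proof (rule back_subst[of "\<lambda>A. slp_buildable _ (insert A P)"], intro grid_cong)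
    fix r c
    show "beside (a * w) (\<lambda>r c. f r (c mod w)) (\<lambda>r c. f r (c mod w)) r c = f r (c mod w)"
      by (simp add: beside_def mod_diff_mult_self)
  qed (simp_all add: distrib_right)
next
  show "grid h (1 * w) (\<lambda>r c. f r (c mod w)) \<in> P"
    using f by (metis (no_types, lifting) grid_cong mod_less mult_1)
qed (simp add: degenerate_grid_iff)

lemma slp_buildable_const:
  assumes P: "slp_buildable k P" and a: "[[a]] \<in> P" and h: "h < 2 ^ e" and w: "w < 2 ^ e"
  shows "slp_buildable (k + 8 * e) (insert (grid h w (\<lambda>_ _. a)) P)"
proof -
  have "slp_buildable (k + 4 * e) (insert (grid 1 w (\<lambda>_ _. a)) P)"
    using slp_buildable_repeat_cols[OF P a[folded grid_singleton] w] by simp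
  from slp_buildable_repeat_rows[OF this _ h, where h = 1 and w = w and f = "\<lambda>_ _. a"]
  have "slp_buildable (k + 4 * e + 4 * e) (insert (grid h w (\<lambda>_ _. a)) (insert (grid 1 w (\<lambda>_ _. a)) P))"
    by simp
  then show ?thesis
    by (rule slp_buildable_mono) auto
qed

definition binary_digits :: "nat \<Rightarrow> nat \<Rightarrow> nat \<Rightarrow> sym" where
  "binary_digits n r c = (if bit r (n - Suc c) then One else Zero)"

lemma binary_digits_Suc:
  assumes r: "r < 2 ^ Suc n" and c: "c < Suc n"
  shows "atop (2 ^ n) (beside 1 (\<lambda>_ _. Zero) (binary_digits n)) (beside 1 (\<lambda>_ _. One) (binary_digits n)) r c
           = binary_digits (Suc n) r c"
proof (cases "r < 2 ^ n")
  case True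
  then have "\<not> bit r n"
    by (simp add: bit_iff_odd)
  with True show ?thesis
    by (cases c) (auto simp: atop_def beside_def binary_digits_def)
next
  case False
  then have high: "r - 2 ^ n = take_bit n r"
    using r by (simp add: take_bit_eq_mod le_mod_geq)
  have "r div 2 ^ n = 1"
    using False r by (intro div_nat_eqI) auto
  then have "bit r n"
    by (simp add: bit_iff_odd)
  with False c show ?thesis
    by (cases c) (auto simp: atop_def beside_def binary_digits_def high bit_take_bit_iff)
qed

text \<open>The constant columns are carried along the induction: rebuilding them at every
  level would cost an extra logarithmic factor.\<close>

lemma slp_buildable_binary_digits:
  assumes P: "slp_buildable k P" and zero: "[[Zero]] \<in> P" and one: "[[One]] \<in> P"
  shows "slp_buildable (k + 10 * n)
           (insert (grid (2 ^ n) n (binary_digits n))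
             (insert (grid (2 ^ n) 1 (\<lambda>_ _. Zero)) (insert (grid (2 ^ n) 1 (\<lambda>_ _. One)) P)))"
proof (induction n)
  case 0
  have "slp_buildable k (insert (grid 1 0 (binary_digits 0)) P)"
    using slp_buildable_insert_degenerate[OF P] by (simp add: degenerate_grid_iff)
  then show ?case
    using zero one by (simp add: insert_absorb grid_def)
next
  case (Suc n)
  let ?D = "grid (2 ^ n) n (binary_digits n)"
    and ?Z = "grid (2 ^ n) 1 (\<lambda>_ _. Zero)"
    and ?O = "grid (2 ^ n) 1 (\<lambda>_ _. One)"
  let ?Q = "insert ?D (insert ?Z (insert ?O P))"
  let ?Z2 = "grid (2 ^ n + 2 ^ n) 1 (\<lambda>_ _. Zero)"
    and ?O2 = "grid (2 ^ n + 2 ^ n) 1 (\<lambda>_ _. One)"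
    and ?ZD = "grid (2 ^ n) (1 + n) (beside 1 (\<lambda>_ _. Zero) (binary_digits n))"
    and ?OD = "grid (2 ^ n) (1 + n) (beside 1 (\<lambda>_ _. One) (binary_digits n))"
  let ?D2 = "grid (2 ^ n + 2 ^ n) (1 + n)
    (atop (2 ^ n) (beside 1 (\<lambda>_ _. Zero) (binary_digits n)) (beside 1 (\<lambda>_ _. One) (binary_digits n)))"
  from slp_buildable_atop[OF Suc.IH, of "2 ^ n" 1 "\<lambda>_ _. Zero" "2 ^ n" "\<lambda>_ _. Zero"]
  have "slp_buildable (k + 10 * n + 2) (insert ?Z2 ?Q)"
    by simp
  from slp_buildable_atop[OF this, of "2 ^ n" 1 "\<lambda>_ _. One" "2 ^ n" "\<lambda>_ _. One"]
  have "slp_buildable (k + 10 * n + 2 + 2) (insert ?O2 (insert ?Z2 ?Q))"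
    by simp
  from slp_buildable_beside[OF this, of "2 ^ n" 1 "\<lambda>_ _. Zero" n "binary_digits n"]
  have "slp_buildable (k + 10 * n + 2 + 2 + 2) (insert ?ZD (insert ?O2 (insert ?Z2 ?Q)))"
    by simp
  from slp_buildable_beside[OF this, of "2 ^ n" 1 "\<lambda>_ _. One" n "binary_digits n"]
  have "slp_buildable (k + 10 * n + 2 + 2 + 2 + 2) (insert ?OD (insert ?ZD (insert ?O2 (insert ?Z2 ?Q))))"
    by simp
  from slp_buildable_atop[OF this, of "2 ^ n" "1 + n" _ "2 ^ n"]
  have "slp_buildable (k + 10 * n + 2 + 2 + 2 + 2 + 2) (insert ?D2 (insert ?OD (insert ?ZD (insert ?O2 (insert ?Z2 ?Q)))))"
    by simp
  moreover have "?D2 = grid (2 ^ Suc n) (Suc n) (binary_digits (Suc n))"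
    by (intro grid_cong binary_digits_Suc) auto
  ultimately show ?case
    by (elim slp_buildable_mono) (auto simp: mult_2)
qed

lemma bin_entry_eq_beside:
  assumes "c < n + 2"
  shows "beside 1 (\<lambda>_ _. Dollar) (beside n (binary_digits n) (\<lambda>_ _. Dollar)) r c = bin_entry n r c"
  using assms by (auto simp: beside_def binary_digits_def bin_entry_def bit_iff_odd odd_iff_mod_2_eq_one)

lemma shiftbin_entry_Suc:
  assumes r: "r < 2 ^ Suc k + 2 ^ n - 1" and c: "c < 2 ^ Suc k * (n + 2)"
  shows "beside (2 ^ k * (n + 2))
           (atop (2 ^ k + 2 ^ n - 1) (shiftbin_entry n) (\<lambda>_ _. Zero))
           (atop (2 ^ k) (\<lambda>_ _. Zero) (shiftbin_entry n)) r c
         = shiftbin_entry n r c"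
proof (cases "c < 2 ^ k * (n + 2)")
  case True
  then have "c div (n + 2) < 2 ^ k"
    by (simp add: div_less_iff_less_mult)
  with True show ?thesis
    by (auto simp: beside_def atop_def shiftbin_entry_def Let_def)
next
  case False
  then obtain c' where c': "c = c' + 2 ^ k * (n + 2)"
    by (metis add.commute le_add_diff_inverse not_le)
  have block: "c div (n + 2) = c' div (n + 2) + 2 ^ k" "c mod (n + 2) = c' mod (n + 2)"
    unfolding c' by (simp_all only: div_mult_self1 mod_mult_self1)
  show ?thesis
  proof (cases "r < 2 ^ k")
    case True
    with False block show ?thesis
      by (auto simp: beside_def atop_def shiftbin_entry_def Let_def)
  next
    case False': False
    then obtain s where s: "r = s + 2 ^ k"
      by (metis add.commute le_add_diff_inverse not_le)
    have "beside (2 ^ k * (n + 2))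
           (atop (2 ^ k + 2 ^ n - 1) (shiftbin_entry n) (\<lambda>_ _. Zero))
           (atop (2 ^ k) (\<lambda>_ _. Zero) (shiftbin_entry n)) r c = shiftbin_entry n s c'"
      using False False' c' s by (simp add: beside_def atop_def)
    also have "\<dots> = shiftbin_entry n r c"
      unfolding shiftbin_entry_def Let_def block s by simp
    finally show ?thesis .
  qed
qed

lemma slp_buildable_shiftbin_prefix:
  assumes P: "slp_buildable k P"
    and bin: "grid (2 ^ n) (n + 2) (bin_entry n) \<in> P" and zero: "grid 1 (n + 2) (\<lambda>_ _. Zero) \<in> P"
  shows "slp_buildable (k + 10 * j)
           (insert (grid (2 ^ j + 2 ^ n - 1) (2 ^ j * (n + 2)) (shiftbin_entry n))
             (insert (grid (2 ^ j) (2 ^ j * (n + 2)) (\<lambda>_ _. Zero)) P))"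
proof (induction j)
  case 0
  have "grid (2 ^ n) (n + 2) (bin_entry n) = grid (2 ^ 0 + 2 ^ n - 1) (2 ^ 0 * (n + 2)) (shiftbin_entry n)"
    by (intro grid_cong) (auto simp: shiftbin_entry_def)
  with P bin zero show ?case
    by (simp add: insert_absorb)
next
  case (Suc j)
  let ?W = "2 ^ j * (n + 2)" and ?h = "2 ^ j + 2 ^ n - 1"
  let ?T = "grid ?h ?W (shiftbin_entry n)" and ?Z = "grid (2 ^ j) ?W (\<lambda>_ _. Zero)"
  let ?Q = "insert ?T (insert ?Z P)"
  let ?ZZ = "grid (2 ^ j) (?W + ?W) (\<lambda>_ _. Zero)"
    and ?Z2 = "grid (2 ^ j + 2 ^ j) (?W + ?W) (\<lambda>_ _. Zero)"
    and ?TZ = "grid (?h + 2 ^ j) ?W (atop ?h (shiftbin_entry n) (\<lambda>_ _. Zero))"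
    and ?ZT = "grid (?h + 2 ^ j) ?W (atop (2 ^ j) (\<lambda>_ _. Zero) (shiftbin_entry n))"
  let ?T2 = "grid (?h + 2 ^ j) (?W + ?W)
    (beside ?W (atop ?h (shiftbin_entry n) (\<lambda>_ _. Zero)) (atop (2 ^ j) (\<lambda>_ _. Zero) (shiftbin_entry n)))"
  from slp_buildable_beside[OF Suc.IH, of "2 ^ j" ?W "\<lambda>_ _. Zero" ?W "\<lambda>_ _. Zero"]
  have "slp_buildable (k + 10 * j + 2) (insert ?ZZ ?Q)"
    by simp
  from slp_buildable_atop[OF this, of "2 ^ j" "?W + ?W" "\<lambda>_ _. Zero" "2 ^ j" "\<lambda>_ _. Zero"]
  have "slp_buildable (k + 10 * j + 2 + 2) (insert ?Z2 (insert ?ZZ ?Q))"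
    by simp
  from slp_buildable_atop[OF this, of ?h ?W "shiftbin_entry n" "2 ^ j" "\<lambda>_ _. Zero"]
  have "slp_buildable (k + 10 * j + 2 + 2 + 2) (insert ?TZ (insert ?Z2 (insert ?ZZ ?Q)))"
    by simp
  from slp_buildable_atop[OF this, of "2 ^ j" ?W "\<lambda>_ _. Zero" ?h "shiftbin_entry n"]
  have "slp_buildable (k + 10 * j + 2 + 2 + 2 + 2) (insert ?ZT (insert ?TZ (insert ?Z2 (insert ?ZZ ?Q))))"
    by (simp add: add.commute)
  from slp_buildable_beside[OF this, of "?h + 2 ^ j" ?W]
  have "slp_buildable (k + 10 * j + 2 + 2 + 2 + 2 + 2) (insert ?T2 (insert ?ZT (insert ?TZ (insert ?Z2 (insert ?ZZ ?Q)))))"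
    by simp
  moreover have "?T2 = grid (2 ^ Suc j + 2 ^ n - 1) (2 ^ Suc j * (n + 2)) (shiftbin_entry n)"
    using one_le_power[of 2 n] by (intro grid_cong shiftbin_entry_Suc) auto
  moreover have "?Z2 = grid (2 ^ Suc j) (2 ^ Suc j * (n + 2)) (\<lambda>_ _. Zero)"
    by (intro grid_cong) (simp_all add: algebra_simps)
  ultimately show ?case
    by (elim slp_buildable_mono) auto
qed

lemma shiftbin_entry_last_row:
  assumes "c < 2 ^ n * (n + 2)"
  shows "atop (2 ^ n + 2 ^ n - 1) (shiftbin_entry n) (\<lambda>_ _. Zero) r c = shiftbin_entry n r c"
proof -
  have "c div (n + 2) < 2 ^ n"
    using assms by (simp add: div_less_iff_less_mult)
  then show ?thesis
    by (auto simp: atop_def shiftbin_entry_def Let_def)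
qed

lemma slp_buildable_shiftbin:
  assumes P: "slp_buildable k P" and zero: "[[Zero]] \<in> P" and one: "[[One]] \<in> P"
    and dollar: "[[Dollar]] \<in> P" and small: "2 ^ n * (n + 2) < 2 ^ e"
  shows "slp_buildable (k + 40 * e + 6) (insert (grid (2 * 2 ^ n) (2 ^ n * (n + 2)) (shiftbin_entry n)) P)"
proof -
  let ?W = "2 ^ n * (n + 2)"
  have "n + 2 \<le> ?W" "2 ^ n \<le> ?W"
    using mult_le_mono1[of 1 "2 ^ n" "n + 2"] by simp_all
  with small have pow_small: "2 ^ n < (2::nat) ^ e" and width_small: "n + 2 < 2 ^ e"
    by linarith+
  then have n_small: "n < e"
    by simp
  have one_small: "1 < (2::nat) ^ e"
    using pow_small one_le_power[of "2::nat" n] by linarith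
  let ?D = "grid (2 ^ n) n (binary_digits n)"
    and ?Z = "grid (2 ^ n) 1 (\<lambda>_ _. Zero)" and ?O = "grid (2 ^ n) 1 (\<lambda>_ _. One)"
    and ?S = "grid (2 ^ n) 1 (\<lambda>_ _. Dollar)"
  let ?DS = "grid (2 ^ n) (n + 1) (beside n (binary_digits n) (\<lambda>_ _. Dollar))"
    and ?SDS = "grid (2 ^ n) (1 + (n + 1)) (beside 1 (\<lambda>_ _. Dollar) (beside n (binary_digits n) (\<lambda>_ _. Dollar)))"
  let ?Bin = "grid (2 ^ n) (n + 2) (bin_entry n)"
    and ?Z1 = "grid 1 (n + 2) (\<lambda>_ _. Zero)"
    and ?T = "grid (2 ^ n + 2 ^ n - 1) ?W (shiftbin_entry n)"
    and ?ZT = "grid (2 ^ n) ?W (\<lambda>_ _. Zero)"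
    and ?ZW = "grid 1 ?W (\<lambda>_ _. Zero)"
  let ?TZ = "grid (2 ^ n + 2 ^ n - 1 + 1) ?W (atop (2 ^ n + 2 ^ n - 1) (shiftbin_entry n) (\<lambda>_ _. Zero))"
  from slp_buildable_binary_digits[OF P zero one]
  have "slp_buildable (k + 10 * n) (insert ?D (insert ?Z (insert ?O P)))" .
  from slp_buildable_repeat_rows[OF this _ pow_small, of 1 1 "\<lambda>_ _. Dollar"] dollar
  have "slp_buildable (k + 10 * n + 4 * e) (insert ?S (insert ?D (insert ?Z (insert ?O P))))"
    by simp
  from slp_buildable_beside[OF this, of "2 ^ n" n "binary_digits n" 1 "\<lambda>_ _. Dollar"]
  have "slp_buildable (k + 10 * n + 4 * e + 2) (insert ?DS (insert ?S (insert ?D (insert ?Z (insert ?O P)))))"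
    by simp
  from slp_buildable_beside[OF this, of "2 ^ n" 1 "\<lambda>_ _. Dollar" "n + 1"]
  have "slp_buildable (k + 10 * n + 4 * e + 2 + 2) (insert ?SDS (insert ?DS (insert ?S (insert ?D (insert ?Z (insert ?O P))))))"
    by simp
  moreover have "?SDS = ?Bin"
    by (intro grid_cong bin_entry_eq_beside) auto
  ultimately have "slp_buildable (k + 10 * n + 4 * e + 4) (insert ?Bin P)"
    by (elim slp_buildable_mono) auto
  from slp_buildable_const[OF this insertI2[OF zero] one_small width_small]
  have "slp_buildable (k + 10 * n + 4 * e + 4 + 8 * e) (insert ?Z1 (insert ?Bin P))" .
  from slp_buildable_shiftbin_prefix[OF this, where j = n]
  have "slp_buildable (k + 10 * n + 4 * e + 4 + 8 * e + 10 * n) (insert ?T (insert ?ZT (insert ?Z1 (insert ?Bin P))))"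
    by simp
  from slp_buildable_const[OF this _ one_small small] zero
  have "slp_buildable (k + 10 * n + 4 * e + 4 + 8 * e + 10 * n + 8 * e)
      (insert ?ZW (insert ?T (insert ?ZT (insert ?Z1 (insert ?Bin P)))))"
    by simp
  from slp_buildable_atop[OF this, of "2 ^ n + 2 ^ n - 1" ?W "shiftbin_entry n" 1 "\<lambda>_ _. Zero"]
  have "slp_buildable (k + 10 * n + 4 * e + 4 + 8 * e + 10 * n + 8 * e + 2)
      (insert ?TZ (insert ?ZW (insert ?T (insert ?ZT (insert ?Z1 (insert ?Bin P))))))"
    by simp
  moreover have "?TZ = grid (2 * 2 ^ n) ?W (shiftbin_entry n)"
    by (intro grid_cong shiftbin_entry_last_row) auto
  ultimately show ?thesis
    by (elim slp_buildable_mono) (use n_small in auto)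
qed

definition periodic_band :: "nat \<Rightarrow> nat \<Rightarrow> nat \<Rightarrow> (nat \<Rightarrow> nat \<Rightarrow> sym) \<Rightarrow> nat \<Rightarrow> nat \<Rightarrow> sym" where
  "periodic_band d q h f = (\<lambda>r c. if d \<le> r \<and> r < d + q * h then f ((r - d) mod h) c else Zero)"

lemma slp_buildable_periodic_band:
  assumes P: "slp_buildable k P" and f: "grid h w f \<in> P" and zero: "[[Zero]] \<in> P"
    and h: "h > 0" and fits: "d + q * h \<le> N" and N: "N < 2 ^ e" and w: "w < 2 ^ e"
  shows "slp_buildable (k + 20 * e + 4) (insert (grid N w (periodic_band d q h f)) P)"
proof -
  let ?F = "\<lambda>r c. f (r mod h) c" and ?l = "d + q * h"
  let ?Zd = "grid d w (\<lambda>_ _. Zero)" and ?Fq = "grid (q * h) w ?F"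
    and ?ZF = "grid ?l w (atop d (\<lambda>_ _. Zero) ?F)" and ?Zr = "grid (N - ?l) w (\<lambda>_ _. Zero)"
  let ?ZFZ = "grid (?l + (N - ?l)) w (atop ?l (atop d (\<lambda>_ _. Zero) ?F) (\<lambda>_ _. Zero))"
  have "q \<le> q * h"
    using h by simp
  with fits N have q: "q < 2 ^ e"
    by linarith
  from slp_buildable_const[OF P zero _ w, of d] fits N
  have "slp_buildable (k + 8 * e) (insert ?Zd P)"
    by simp
  from slp_buildable_repeat_rows[OF this _ q, of h w f] f
  have "slp_buildable (k + 8 * e + 4 * e) (insert ?Fq (insert ?Zd P))"
    by simp
  from slp_buildable_atop[OF this, of d w "\<lambda>_ _. Zero" "q * h" ?F]
  have "slp_buildable (k + 8 * e + 4 * e + 2) (insert ?ZF (insert ?Fq (insert ?Zd P)))"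
    by simp
  from slp_buildable_const[OF this _ _ w, of Zero "N - ?l"] zero N
  have "slp_buildable (k + 8 * e + 4 * e + 2 + 8 * e) (insert ?Zr (insert ?ZF (insert ?Fq (insert ?Zd P))))"
    by simp
  from slp_buildable_atop[OF this, of ?l w _ "N - ?l" "\<lambda>_ _. Zero"]
  have "slp_buildable (k + 8 * e + 4 * e + 2 + 8 * e + 2) (insert ?ZFZ (insert ?Zr (insert ?ZF (insert ?Fq (insert ?Zd P)))))"
    by simp
  moreover have "?ZFZ = grid N w (periodic_band d q h f)"
    using fits by (intro grid_cong) (auto simp: atop_def periodic_band_def)
  ultimately show ?thesis
    by (elim slp_buildable_mono) auto
qed

lemma Mexp_bound: "4 \<le> M \<Longrightarrow> 2 * 2 ^ Mexp M * (Mexp M + 2) \<le> M"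
  unfolding Mexp_def
proof (rule GreatestI_nat[where k = 0 and b = M])
  fix y
  assume "2 * 2 ^ y * (y + 2) \<le> M"
  moreover have "y < 2 ^ y" "(2::nat) ^ y \<le> 2 * 2 ^ y * (y + 2)"
    using less_exp[of y] by simp_all
  ultimately show "y \<le> M"
    by linarith
qed simp

lemma C_str_eq_grid: "C_str N M = grid N M (C_entry N M)"
  by (simp add: C_str_def grid_def)

lemma C_entry_eq_beside:
  fixes N M :: nat
  defines "n \<equiv> Mexp M" and "m \<equiv> 2 ^ Mexp M"
  defines "W \<equiv> m * (n + 2)"
  shows "C_entry N M r c =
    beside (W + W)
      (beside W (periodic_band 0 (N div (2 * m)) (2 * m) (shiftbin_entry n))
                (periodic_band m ((N - m) div (2 * m)) (2 * m) (shiftbin_entry n)))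
      (\<lambda>_ _. Zero) r c"
  by (simp add: C_entry_def Let_def beside_def periodic_band_def n_def m_def W_def)

lemma slp_buildable_C_str:
  assumes M: "4 \<le> M" and N: "Mpow M \<le> N" and N_small: "N < 2 ^ e" and M_small: "M < 2 ^ e"
  shows "slp_buildable (88 * e + 21) {C_str N M}"
proof -
  define n where "n = Mexp M"
  define m where "m = (2::nat) ^ n"
  define W where "W = m * (n + 2)"
  define left where "left = periodic_band 0 (N div (2 * m)) (2 * m) (shiftbin_entry n)"
  define right where "right = periodic_band m ((N - m) div (2 * m)) (2 * m) (shiftbin_entry n)"
  let ?B = "grid (2 * m) W (shiftbin_entry n)"
    and ?L = "grid N W left" and ?R = "grid N W right" and ?Z = "grid N (M - (W + W)) (\<lambda>_ _. Zero)"
  let ?Q = "{[[Dollar]], [[One]], [[Zero]]}"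
  have W_le: "2 * W \<le> M"
    using Mexp_bound[OF M] by (simp add: W_def m_def n_def)
  have m_le: "m \<le> N"
    using N by (simp add: Mpow_def m_def n_def)
  have W_small: "W < 2 ^ e"
    using W_le M_small by linarith
  have m_pos: "2 * m > 0"
    by (simp add: m_def)
  have fits_left: "0 + N div (2 * m) * (2 * m) \<le> N"
    by (simp add: div_times_less_eq_dividend)
  have fits_right: "m + (N - m) div (2 * m) * (2 * m) \<le> N"
    using m_le div_times_less_eq_dividend[of "N - m" "2 * m"] by linarith
  have "slp_buildable (0 + 1 + 1 + 1) ?Q"
    by (intro slp_buildable_term slp_buildable_empty)
  from slp_buildable_shiftbin[OF this _ _ _ W_small[unfolded W_def m_def]]
  have "slp_buildable (3 + 40 * e + 6) (insert ?B ?Q)"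
    by (simp add: W_def m_def)
  from slp_buildable_periodic_band[OF this _ _ m_pos fits_left N_small W_small]
  have "slp_buildable (3 + 40 * e + 6 + 20 * e + 4) (insert ?L (insert ?B ?Q))"
    by (simp add: left_def)
  from slp_buildable_periodic_band[OF this _ _ m_pos fits_right N_small W_small]
  have "slp_buildable (3 + 40 * e + 6 + 20 * e + 4 + 20 * e + 4) (insert ?R (insert ?L (insert ?B ?Q)))"
    by (simp add: right_def)
  from slp_buildable_const[OF this _ N_small, of Zero "M - (W + W)"] M_small
  have "slp_buildable (3 + 40 * e + 6 + 20 * e + 4 + 20 * e + 4 + 8 * e) (insert ?Z (insert ?R (insert ?L (insert ?B ?Q))))"
    by simp
  from slp_buildable_beside[OF this, of N W left W right]
  have "slp_buildable (3 + 40 * e + 6 + 20 * e + 4 + 20 * e + 4 + 8 * e + 2)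
      (insert (grid N (W + W) (beside W left right)) (insert ?Z (insert ?R (insert ?L (insert ?B ?Q)))))"
    by simp
  from slp_buildable_beside[OF this insertI1 insertI2[OF insertI1]]
  have "slp_buildable (88 * e + 21) {grid N (W + W + (M - (W + W))) (beside (W + W) (beside W left right) (\<lambda>_ _. Zero))}"
    by (rule slp_buildable_mono) auto
  moreover have "grid N (W + W + (M - (W + W))) (beside (W + W) (beside W left right) (\<lambda>_ _. Zero)) = C_str N M"
    using W_le unfolding C_str_eq_grid
    by (intro grid_cong) (auto simp: C_entry_eq_beside[of N M] n_def m_def W_def left_def right_def)
  ultimately show ?thesis
    by simp
qed

lemma slp_buildable_derives:
  assumes "slp_buildable k {A}" and "\<not> degenerate A"
  shows "\<exists>G s. slp_derives G s A \<and> slp_size G \<le> k"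
  using assms unfolding slp_buildable_def slp_pictures_def slp_derives_def by blast

lemma floorlog_le_log: "0 < x \<Longrightarrow> real (floorlog 2 x) \<le> log 2 (real x) + 1"
  by (simp add: floorlog_def)

lemma floorlog_mult_bound:
  fixes N M :: nat
  assumes N: "1 \<le> N" and M: "4 \<le> M"
  shows "88 * real (floorlog 2 (N * M)) + 21 \<le> 150 * (log 2 (real N) + log 2 (real M))"
proof -
  let ?L = "log 2 (real N) + log 2 (real M)"
  have "log 2 4 \<le> log 2 (real M)" "0 \<le> log 2 (real N)"
    using M N by simp_all
  moreover have "log 2 (4::real) = 2"
    using log_pow_cancel[of 2 2] by simp
  ultimately have L: "2 \<le> ?L"
    by linarith
  have "real (floorlog 2 (N * M)) \<le> log 2 (real (N * M)) + 1"
    using N M by (intro floorlog_le_log) simp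
  then have "88 * real (floorlog 2 (N * M)) + 21 \<le> 88 * (?L + 1) + 21"
    using N M by (simp add: log_mult)
  also have "\<dots> \<le> 150 * ?L"
    using L by simp
  finally show ?thesis .
qed

theorem mainTheorem8:
  shows "\<exists>c::real. c > 0 \<and>
           (\<forall>N M. C_defined N M \<longrightarrow>
              (\<exists>G s. slp_derives G s (C_str N M) \<and>
                     real (slp_size G) \<le> c * (log 2 (real N) + log 2 (real M))))"
proof (intro exI[of _ 150] conjI allI impI)
  fix N M
  assume "C_defined N M"
  then have N: "1 \<le> N" and M: "4 \<le> M" and MN: "Mpow M \<le> N"
    by (auto simp: C_defined_def)
  define e where "e = floorlog 2 (N * M)"
  have "N * M < 2 ^ e"
    using floorlog_bounds[of "N * M" 2] N M by (simp add: e_def)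
  moreover have "N \<le> N * M" "M \<le> N * M"
    using N M by simp_all
  ultimately have "slp_buildable (88 * e + 21) {C_str N M}"
    by (intro slp_buildable_C_str[OF M MN]) linarith+
  moreover have "\<not> degenerate (C_str N M)"
    using N M by (simp add: C_str_eq_grid degenerate_grid_iff)
  ultimately obtain G s where G: "slp_derives G s (C_str N M)" "slp_size G \<le> 88 * e + 21"
    using slp_buildable_derives by blast
  have "real (slp_size G) \<le> 88 * real e + 21"
    using G(2) by linarith
  also have "\<dots> \<le> 150 * (log 2 (real N) + log 2 (real M))"
    using floorlog_mult_bound[OF N M] by (simp add: e_def)
  finally show "\<exists>G s. slp_derives G s (C_str N M) \<and> real (slp_size G) \<le> 150 * (log 2 (real N) + log 2 (real M))"
    using G(1) by blast
qed simp

end
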